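(* Let $\mathbb{R}^n_s$ be $\mathbb{R}^n$ with a non-degenerate symmetric bilinear form $\langle\cdot,\cdot\rangle$ of signature $(n-s,s)$, let $G\subset\mathrm{Iso}(\mathbb{R}^n_s)$ be a real Zariski-closed subgroup whose centralizer in $\mathrm{Iso}(\mathbb{R}^n_s)$ acts transitively on $\mathbb{R}^n$, and let $\mathfrak{g}$ be its Lie algebra with the symmetric bilinear form $(\cdot,\cdot)$ induced by the orbit metric. Assume there exist $Z\in[\mathfrak{g},\mathfrak{g}]$ and $Z^*\in\mathfrak{g}$ with $(Z,Z^* )\neq0$. Then $Z^*\notin\mathfrak{z}(\mathfrak{g})$.
   Context: Elements of $\mathfrak{g}$ are written $(A,v)$ (matrices $\begin{pmatrix}A&v\\0&0\end{pmatrix}$). For fixed $p\in\mathbb{R}^n$, the orbit metric form on $\mathfrak{g}$ is $(X,Y)=\langle A_Xp+v_X,\,A_Yp+v_Y\rangle$, i.e. the pullback of $\langle\cdot,\cdot\rangle$ on the orbit $G.p$ via the orbit map; it satisfies $([X,Y],Z)=-(Y,[X,Z])$. $\mathfrak{z}(\mathfrak{g})$ denotes the center of $\mathfrak{g}$. *)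

theory Defs
  imports "HOL-Analysis.Analysis"
begin

text \<open>Affine maps of R^n: a pair (A, v) stands for the map x \<mapsto> A x + v, i.e. the
  (n+1)x(n+1) matrix with blocks A, v, 0, 1. Lie algebra elements (A, v) stand for
  the matrix with blocks A, v, 0, 0.\<close>

type_synonym 'n aff = "(real^'n^'n) \<times> (real^'n)"

definition aff_apply :: "'n::finite aff \<Rightarrow> real^'n \<Rightarrow> real^'n" where
  "aff_apply g x = fst g *v x + snd g"

definition aff_mult :: "'n::finite aff \<Rightarrow> 'n aff \<Rightarrow> 'n aff" where
  "aff_mult g h = (fst g ** fst h, fst g *v snd h + snd g)"

definition aff_id :: "'n::finite aff" where
  "aff_id = (mat 1, 0)"

definition aff_inv :: "'n::finite aff \<Rightarrow> 'n aff" where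
  "aff_inv g = (matrix_inv (fst g), - (matrix_inv (fst g) *v snd g))"

definition form :: "real^'n^'n \<Rightarrow> real^'n \<Rightarrow> real^'n \<Rightarrow> real" where
  "form Q x y = x \<bullet> (Q *v y)"

definition nondeg_sym :: "real^'n^'n \<Rightarrow> bool" where
  "nondeg_sym Q \<longleftrightarrow> transpose Q = Q \<and> invertible Q"

definition iso_group :: "real^'n^'n \<Rightarrow> 'n::finite aff set" where
  "iso_group Q = {g. transpose (fst g) ** Q ** fst g = Q}"

inductive_set poly_fun :: "('n::finite aff \<Rightarrow> real) set" where
  const: "(\<lambda>_. c) \<in> poly_fun"
| entA: "(\<lambda>g. fst g $ i $ j) \<in> poly_fun"
| entv: "(\<lambda>g. snd g $ i) \<in> poly_fun"
| add: "f \<in> poly_fun \<Longrightarrow> h \<in> poly_fun \<Longrightarrow> (\<lambda>g. f g + h g) \<in> poly_fun"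
| mult: "f \<in> poly_fun \<Longrightarrow> h \<in> poly_fun \<Longrightarrow> (\<lambda>g. f g * h g) \<in> poly_fun"

definition zariski_closed_subgroup :: "real^'n^'n \<Rightarrow> 'n::finite aff set \<Rightarrow> bool" where
  "zariski_closed_subgroup Q G \<longleftrightarrow>
     G \<subseteq> iso_group Q \<and> aff_id \<in> G \<and>
     (\<forall>g\<in>G. \<forall>h\<in>G. aff_mult g h \<in> G) \<and> (\<forall>g\<in>G. aff_inv g \<in> G) \<and>
     (\<exists>F \<subseteq> poly_fun. G = {g \<in> iso_group Q. \<forall>f\<in>F. f g = 0})"

definition centralizer :: "real^'n^'n \<Rightarrow> 'n::finite aff set \<Rightarrow> 'n aff set" where
  "centralizer Q G = {h \<in> iso_group Q. \<forall>g\<in>G. aff_mult h g = aff_mult g h}"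

definition acts_transitively :: "'n::finite aff set \<Rightarrow> bool" where
  "acts_transitively H \<longleftrightarrow> (\<forall>x y. \<exists>h\<in>H. aff_apply h x = y)"

definition lie_algebra :: "'n::finite aff set \<Rightarrow> 'n aff set" where
  "lie_algebra G = {X. \<exists>\<gamma>. (\<forall>t. \<gamma> t \<in> G) \<and> \<gamma> 0 = aff_id \<and> (\<gamma> has_vector_derivative X) (at 0)}"

definition lie_bracket :: "'n::finite aff \<Rightarrow> 'n aff \<Rightarrow> 'n aff" where
  "lie_bracket X Y = (fst X ** fst Y - fst Y ** fst X, fst X *v snd Y - fst Y *v snd X)"

definition derived_algebra :: "'n::finite aff set \<Rightarrow> 'n aff set" where
  "derived_algebra \<g> = span {lie_bracket X Y | X Y. X \<in> \<g> \<and> Y \<in> \<g>}"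

definition lie_center :: "'n::finite aff set \<Rightarrow> 'n aff set" where
  "lie_center \<g> = {Z \<in> \<g>. \<forall>X\<in>\<g>. lie_bracket X Z = 0}"

definition orbit_form :: "real^'n^'n \<Rightarrow> real^'n \<Rightarrow> 'n::finite aff \<Rightarrow> 'n aff \<Rightarrow> real" where
  "orbit_form Q p X Y = form Q (fst X *v p + snd X) (fst Y *v p + snd Y)"

end

theory Submission
  imports Defs
begin

text \<open>The orbit form satisfies the invariance identity ([X,Y],Z) = -(Y,[X,Z]) on the Lie algebra.
  If Z* were central, every ([X,Y],Z*) would therefore vanish, and by linearity so would
  (Z,Z*) for Z in the derived algebra. Invariance rests on two facts: the linear parts of
  elements of the Lie algebra are skew for the form, and, because the centralizer moves 0 to
  any point w, the orbit form does not depend on the base point. Polarizing the latter in w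
  shows that the linear parts anticommute and that A_X v_Y + A_Y v_X = 0, which is exactly
  the missing half of invariance.\<close>

lemma form_add_left: "form Q (x + y) z = form Q x z + form Q y z"
  by (simp add: form_def inner_add_left)

lemma form_add_right: "form Q x (y + z) = form Q x y + form Q x z"
  by (simp add: form_def inner_add_right matrix_vector_right_distrib)

lemma form_diff_left: "form Q (x - y) z = form Q x z - form Q y z"
  by (simp add: form_def inner_diff_left)

lemma form_diff_right: "form Q x (y - z) = form Q x y - form Q x z"
  by (simp add: form_def inner_diff_right matrix_vector_mult_diff_distrib)

lemma form_uminus_left: "form Q (- x) z = - form Q x z"
  by (simp add: form_def)

lemma form_uminus_right: "form Q x (- z) = - form Q x z"
  using form_diff_right[of Q x 0 z] by (simp add: form_def)

lemma matrix_vector_mult_uminus_right: "(A::real^'n::finite^'m::finite) *v (- w) = - (A *v w)"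
  by (metis diff_0 matrix_vector_mult_diff_distrib matrix_vector_mult_0_right)

lemma form_zero_right [simp]: "form Q x 0 = 0"
  by (simp add: form_def)

lemma form_commute: "transpose Q = Q \<Longrightarrow> form Q x y = form Q y x"
  unfolding form_def
  by (metis dot_lmul_matrix inner_commute transpose_transpose vector_transpose_matrix)

lemma form_nondegenerate:
  assumes "invertible Q" and "\<And>w. form Q w c = 0"
  shows "c = 0"
proof -
  have "(Q *v c) \<bullet> (Q *v c) = 0"
    using assms(2)[of "Q *v c"] by (simp add: form_def)
  then have "Q *v c = 0" by simp
  with assms(1) show ?thesis
    by (metis invertible_def matrix_vector_mul_assoc matrix_vector_mul_lid matrix_vector_mult_0_right)
qed

lemma iso_group_form:
  assumes "h \<in> iso_group Q"
  shows "form Q (fst h *v x) (fst h *v y) = form Q x y"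
proof -
  have "form Q (fst h *v x) (fst h *v y) = x \<bullet> ((transpose (fst h) ** Q ** fst h) *v y)"
    unfolding form_def by (metis dot_lmul_matrix matrix_vector_mul_assoc vector_transpose_matrix)
  with assms show ?thesis by (simp add: iso_group_def form_def)
qed

lemma bounded_linear_matrix_vector_mult_left:
  "bounded_linear (\<lambda>M::real^'n::finite^'m::finite. M *v a)"
proof -
  have "linear (\<lambda>M::real^'n::finite^'m::finite. M *v a)"
    by (rule linearI) (auto simp: matrix_vector_mult_add_rdistrib scaleR_matrix_vector_assoc)
  then show ?thesis by (simp add: linear_conv_bounded_linear)
qed

lemma lie_algebra_linear_part_skew:
  assumes "G \<subseteq> iso_group Q" and "X \<in> lie_algebra G"
  shows "form Q (fst X *v a) b + form Q a (fst X *v b) = 0"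
proof -
  obtain \<gamma> where \<gamma>: "\<forall>t. \<gamma> t \<in> G" "\<gamma> 0 = aff_id" "(\<gamma> has_vector_derivative X) (at 0)"
    using assms(2) by (auto simp: lie_algebra_def)
  let ?f = "\<lambda>t. (fst (\<gamma> t) *v a) \<bullet> (Q *v (fst (\<gamma> t) *v b))"
  have "((\<lambda>t. fst (\<gamma> t)) has_vector_derivative fst X) (at 0)"
    by (rule bounded_linear.has_vector_derivative[OF bounded_linear_fst \<gamma>(3)])
  then have "((\<lambda>t. fst (\<gamma> t) *v c) has_vector_derivative fst X *v c) (at 0)" for c
    by (rule bounded_linear.has_vector_derivative[OF bounded_linear_matrix_vector_mult_left])
  then have "(?f has_vector_derivative
      (fst (\<gamma> 0) *v a) \<bullet> (Q *v (fst X *v b)) + (fst X *v a) \<bullet> (Q *v (fst (\<gamma> 0) *v b))) (at 0)"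
    by (intro bounded_bilinear.has_vector_derivative[OF bounded_bilinear_inner]
        bounded_linear.has_vector_derivative[OF matrix_vector_mul_bounded_linear])
  moreover have "(?f has_vector_derivative 0) (at 0)"
  proof -
    have "?f t = form Q a b" for t
      using iso_group_form[of "\<gamma> t" Q a b] \<gamma>(1) assms(1) by (auto simp: form_def)
    then show ?thesis by simp
  qed
  ultimately show ?thesis
    using vector_derivative_unique_at \<gamma>(2) by (fastforce simp: aff_id_def form_def)
qed

text \<open>Differentiating h \<circ> \<gamma>(t) = \<gamma>(t) \<circ> h at the translation parts.\<close>

lemma lie_algebra_centralizer_translation:
  assumes "X \<in> lie_algebra G" and "h \<in> centralizer Q G"
  shows "fst h *v snd X = fst X *v snd h + snd X"
proof -
  obtain \<gamma> where \<gamma>: "\<forall>t. \<gamma> t \<in> G" "\<gamma> 0 = aff_id" "(\<gamma> has_vector_derivative X) (at 0)"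
    using assms(1) by (auto simp: lie_algebra_def)
  have commute: "fst h *v snd (\<gamma> t) + snd h = fst (\<gamma> t) *v snd h + snd (\<gamma> t)" for t
  proof -
    have "aff_mult h (\<gamma> t) = aff_mult (\<gamma> t) h"
      using assms(2) \<gamma>(1) unfolding centralizer_def by auto
    then show ?thesis unfolding aff_mult_def by (metis snd_conv)
  qed
  have dfst: "((\<lambda>t. fst (\<gamma> t)) has_vector_derivative fst X) (at 0)"
    by (rule bounded_linear.has_vector_derivative[OF bounded_linear_fst \<gamma>(3)])
  have dsnd: "((\<lambda>t. snd (\<gamma> t)) has_vector_derivative snd X) (at 0)"
    by (rule bounded_linear.has_vector_derivative[OF bounded_linear_snd \<gamma>(3)])
  have "((\<lambda>t. fst h *v snd (\<gamma> t) + snd h) has_vector_derivative fst h *v snd X + 0) (at 0)"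
    by (intro has_vector_derivative_add has_vector_derivative_const
        bounded_linear.has_vector_derivative[OF matrix_vector_mul_bounded_linear dsnd])
  moreover have "((\<lambda>t. fst h *v snd (\<gamma> t) + snd h) has_vector_derivative fst X *v snd h + snd X) (at 0)"
    unfolding commute
    by (intro has_vector_derivative_add dsnd
        bounded_linear.has_vector_derivative[OF bounded_linear_matrix_vector_mult_left dfst])
  ultimately show ?thesis
    using vector_derivative_unique_at by fastforce
qed

locale isometry_group_transitive_centralizer =
  fixes Q :: "real^'n::finite^'n" and G :: "'n aff set"
  assumes form_sym: "transpose Q = Q"
    and form_invertible: "invertible Q"
    and subset_iso_group: "G \<subseteq> iso_group Q"
    and centralizer_transitive: "acts_transitively (centralizer Q G)"
begin

lemma orbit_form_base_point_independent:
  assumes "X \<in> lie_algebra G" and "Y \<in> lie_algebra G"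
  shows "orbit_form Q w X Y = form Q (snd X) (snd Y)"
proof -
  obtain h where h: "h \<in> centralizer Q G" "aff_apply h 0 = w"
    using centralizer_transitive unfolding acts_transitively_def by blast
  then have "snd h = w" and "h \<in> iso_group Q"
    by (simp_all add: aff_apply_def centralizer_def)
  then show ?thesis
    using iso_group_form[of h Q "snd X" "snd Y"] h(1) assms
    by (simp add: orbit_form_def lie_algebra_centralizer_translation)
qed

text \<open>The quadratic and the linear term in w of the base-point independent orbit form.\<close>

lemma lie_algebra_orbit_polarization:
  assumes "X \<in> lie_algebra G" and "Y \<in> lie_algebra G"
  shows "form Q (fst X *v w) (fst Y *v w) = 0"
    and "form Q (fst X *v w) (snd Y) + form Q (snd X) (fst Y *v w) = 0"
proof -
  have "orbit_form Q w X Y = orbit_form Q (- w) X Y"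
    using orbit_form_base_point_independent[OF assms] by simp
  moreover have "orbit_form Q w X Y = form Q (snd X) (snd Y)"
    using orbit_form_base_point_independent[OF assms] .
  ultimately show "form Q (fst X *v w) (fst Y *v w) = 0"
    and "form Q (fst X *v w) (snd Y) + form Q (snd X) (fst Y *v w) = 0"
    unfolding orbit_form_def matrix_vector_mult_uminus_right form_add_left form_add_right
      form_uminus_left form_uminus_right
    by linarith+
qed

lemma lie_algebra_linear_parts_anticommute:
  assumes X: "X \<in> lie_algebra G" and Y: "Y \<in> lie_algebra G"
  shows "fst X *v (fst Y *v b) + fst Y *v (fst X *v b) = 0"
proof (rule form_nondegenerate[OF form_invertible])
  fix a
  have "form Q (fst X *v (a + b)) (fst Y *v (a + b)) = 0"
    "form Q (fst X *v a) (fst Y *v a) = 0" "form Q (fst X *v b) (fst Y *v b) = 0"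
    using lie_algebra_orbit_polarization(1)[OF X Y] by auto
  then have "form Q (fst X *v a) (fst Y *v b) + form Q (fst X *v b) (fst Y *v a) = 0"
    unfolding matrix_vector_right_distrib form_add_left form_add_right by linarith
  then show "form Q a (fst X *v (fst Y *v b) + fst Y *v (fst X *v b)) = 0"
    using lie_algebra_linear_part_skew[OF subset_iso_group X, of a "fst Y *v b"]
      lie_algebra_linear_part_skew[OF subset_iso_group Y, of a "fst X *v b"]
      form_commute[OF form_sym, of "fst X *v b" "fst Y *v a"]
    unfolding form_add_right by linarith
qed

lemma lie_algebra_translation_parts_anticommute:
  assumes X: "X \<in> lie_algebra G" and Y: "Y \<in> lie_algebra G"
  shows "fst X *v snd Y + fst Y *v snd X = 0"
proof (rule form_nondegenerate[OF form_invertible])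
  fix a
  show "form Q a (fst X *v snd Y + fst Y *v snd X) = 0"
    using lie_algebra_orbit_polarization(2)[OF X Y, of a]
      lie_algebra_linear_part_skew[OF subset_iso_group X, of a "snd Y"]
      lie_algebra_linear_part_skew[OF subset_iso_group Y, of a "snd X"]
      form_commute[OF form_sym, of "snd X" "fst Y *v a"]
    unfolding form_add_right by linarith
qed

lemma orbit_form_invariant:
  assumes X: "X \<in> lie_algebra G" and Y: "Y \<in> lie_algebra G" and Z: "Z \<in> lie_algebra G"
  shows "orbit_form Q p (lie_bracket X Y) Z = - orbit_form Q p Y (lie_bracket X Z)"
proof -
  define u where "u W = fst W *v p + snd W" for W :: "'n aff"
  have bracket: "u (lie_bracket V W) = fst V *v u W - fst W *v u V" for V W
    by (simp add: lie_bracket_def u_def algebra_simps matrix_vector_mul_assoc)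
  have "fst Y *v u Z + fst Z *v u Y = 0"
    using lie_algebra_linear_parts_anticommute[OF Y Z, of p]
      lie_algebra_translation_parts_anticommute[OF Y Z]
    by (simp add: u_def matrix_vector_right_distrib algebra_simps)
  then have "form Q (u X) (fst Y *v u Z) + form Q (u X) (fst Z *v u Y) = 0"
    by (metis form_add_right form_zero_right)
  then show ?thesis
    using lie_algebra_linear_part_skew[OF subset_iso_group X, of "u Y" "u Z"]
      lie_algebra_linear_part_skew[OF subset_iso_group Y, of "u X" "u Z"]
      lie_algebra_linear_part_skew[OF subset_iso_group Z, of "u Y" "u X"]
      form_commute[OF form_sym, of "u X" "fst Y *v u Z"]
      form_commute[OF form_sym, of "u X" "fst Z *v u Y"]
    unfolding orbit_form_def u_def[symmetric] bracket form_diff_left form_diff_right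
    by linarith
qed

end

lemma linear_orbit_form_left: "linear (\<lambda>X. orbit_form Q p X Y)"
  unfolding orbit_form_def form_def
  by (rule linearI)
    (auto simp: matrix_vector_mult_add_rdistrib scaleR_matrix_vector_assoc[symmetric]
      inner_add_left algebra_simps)

theorem corollary4p8:
  fixes Q :: "real^'n^'n" and G :: "'n::finite aff set" and p :: "real^'n"
    and Z Zs :: "'n aff"
  assumes "nondeg_sym Q"
    and "zariski_closed_subgroup Q G"
    and "acts_transitively (centralizer Q G)"
    and "Z \<in> derived_algebra (lie_algebra G)"
    and "Zs \<in> lie_algebra G"
    and "orbit_form Q p Z Zs \<noteq> 0"
  shows "Zs \<notin> lie_center (lie_algebra G)"
proof
  assume central: "Zs \<in> lie_center (lie_algebra G)"
  interpret isometry_group_transitive_centralizer Q G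
    using assms(1-3) unfolding nondeg_sym_def zariski_closed_subgroup_def
    by unfold_locales blast+
  have "orbit_form Q p W Zs = 0"
    if W: "W \<in> {lie_bracket X Y | X Y. X \<in> lie_algebra G \<and> Y \<in> lie_algebra G}" for W
  proof -
    obtain X Y where XY: "W = lie_bracket X Y" "X \<in> lie_algebra G" "Y \<in> lie_algebra G"
      using W by blast
    have "lie_bracket X Zs = 0"
      using central XY(2) by (simp add: lie_center_def)
    then show ?thesis
      using orbit_form_invariant[OF XY(2,3) assms(5)] XY(1) by (simp add: orbit_form_def)
  qed
  then have "orbit_form Q p Z Zs = 0"
    using linear_eq_0_on_span[OF linear_orbit_form_left] assms(4)
    unfolding derived_algebra_def by blast
  with assms(6) show False ..
qed

end
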